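(* Assume the standing hypotheses, let $\sigma\in(0,1)$ and $C_1>0$. Then there exist $\rho>0$, $\bar\mu\in(0,\hat\mu]$ and $C>0$ such that for all $\mu\in(0,\bar\mu]$ and all $(x,\lambda)\in\mathcal B((x^*,\lambda^* ),\delta)$ with $x>0,\lambda>0$, $\|(x,\lambda)-(x^\mu,\lambda^\mu)\|<\rho$ and $\|F_\mu(x,\lambda)\|\le C_1\mu$, the following is well defined and satisfies $$\|(\Delta x,\Delta\lambda)-(\Delta x^N,\Delta\lambda^N)\|\le C\mu^2,$$ where $(\Delta x^N,\Delta\lambda^N)$ is the Newton direction for $\mu^+=\sigma\mu$ and $(\Delta x,\Delta\lambda)$ is constructed as follows. For $i\in\mathcal A$, $\Delta x_i\in\{\Delta x_i^S,\Delta x_i^C\}$ (chosen arbitrarily per index). $\Delta x_{\mathcal I}=\Delta x_{\mathcal I}^{ls}$ is the solution of $$\big(H_{\mathcal I\mathcal I}+X_{\mathcal I\mathcal I}^{-1}\Lambda_{\mathcal I\mathcal I}\big)\Delta x^{ls}_{\mathcal I}=-\big(\nabla f(x)_{\mathcal I}+H_{\mathcal I\mathcal A}\Delta x_{\mathcal A}\big)+\mu^+X_{\mathcal I\mathcal I}^{-1}e .$$ For $i\in\mathcal I$, $\Delta\lambda_i\in\{\Delta\lambda_i^{ls},\Delta\lambda_i^C\}$ where $\Delta\lambda^{ls}_{\mathcal I}=-\lambda_{\mathcal I}+\mu^+X_{\mathcal I\mathcal I}^{-1}e-X_{\mathcal I\mathcal I}^{-1}\Lambda_{\mathcal I\mathcal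 I}\Delta x^{ls}_{\mathcal I}$. For $i\in\mathcal A$, $\Delta\lambda_i\in\{\Delta\lambda_i^{ls},\Delta\lambda_i^b\}$ where $$\Delta\lambda^b_{\mathcal A}=\nabla f(x)_{\mathcal A}-\lambda_{\mathcal A}+H_{\mathcal A\mathcal A}\Delta x_{\mathcal A}+H_{\mathcal A\mathcal I}\Delta x^{ls}_{\mathcal I},$$ $$\Delta\lambda^{ls}_{\mathcal A}=\big(I+X_{\mathcal A\mathcal A}^2\big)^{-1}\Big[\Delta\lambda^b_{\mathcal A}-X_{\mathcal A\mathcal A}\big(\Lambda_{\mathcal A\mathcal A}X_{\mathcal A\mathcal A}e-\mu^+e+\Lambda_{\mathcal A\mathcal A}\Delta x_{\mathcal A}\big)\Big]$$ (the least-squares solution of the overdetermined system $-\Delta\lambda_{\mathcal A}=-(\Delta\lambda^b_{\mathcal A})$, $X_{\mathcal A\mathcal A}\Delta\lambda_{\mathcal A}=-(\Lambda_{\mathcal A\mathcal A}X_{\mathcal A\mathcal A}e-\mu^+e+\Lambda_{\mathcal A\mathcal A}\Delta x_{\mathcal A})$).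
   Context: Problem: minimize $f(x)$ subject to $x\ge0$, $f:\mathbb R^n\to\mathbb R$ twice continuously differentiable with locally Lipschitz Hessian. Norms Euclidean; $e$ all-ones; $X=\mathrm{diag}(x)$, $\Lambda=\mathrm{diag}(\lambda)$; $H=\nabla^2 f(x)$; subscripts $\mathcal A,\mathcal I$ denote sub-vectors and sub-blocks (first subscript rows, second columns). $F_\mu(x,\lambda)=\begin{bmatrix}\nabla f(x)-\lambda\\ \Lambda Xe-\mu e\end{bmatrix}$, $F'(x,\lambda)=\begin{bmatrix}H&-I\\ \Lambda&X\end{bmatrix}$. The Newton direction for $\mu^+=\sigma\mu$ solves $F'(x,\lambda)(\Delta x^N,\Delta\lambda^N)=-F_{\mu^+}(x,\lambda)$. Partial approximations: $\Delta x_i^S=-\frac{x_i[\nabla f(x)]_i-\mu^+}{x_iH_{ii}+\lambda_i}$, $\Delta x_i^C=-x_i+\mu^+/\lambda_i$, $\Delta\lambda_i^C=-\lambda_i+\mu^+/x_i$. Standing hypotheses: $(x^*,\lambda^* )$ satisfies $\nabla f(x^* )=\lambda^*$, $x^*\ge0$, $\lambda^*\ge0$, $x_i^*\lambda_i^*=0$, $x^*+\lambda^*>0$, $[\nabla^2f(x^* )]_{\mathcal I\mathcal I}\succ0$, where $\mathcal A=\{i:x^*_i=0\}$, $\mathcal I=\{i:x_i^*>0\}$. $\delta>0$: $F'$ nonsingular on $\mathcal B((x^*,\lambda^* ),\delta)$ with $\|F'^{-1}\|\le M$; $\hat\mu>0$: for $\mu\in(0,\hat\mu]$ a Lipschitz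 barrier trajectory $(x^\mu,\lambda^\mu)\in\mathcal B((x^*,\lambda^* ),\delta)$ with $F_\mu(x^\mu,\lambda^\mu)=0$, $\|(x^\mu,\lambda^\mu)-(x^*,\lambda^* )\|\le C_4\mu$ exists. *)

theory Defs
  imports "HOL-Analysis.Analysis"
begin

text \<open>Pairs (x,lambda) live in (real^'n) \<times> (real^'n), whose library norm is the Euclidean
  norm sqrt(norm x^2 + norm lambda^2).  gx stands for the gradient vector at x,
  H for the Hessian matrix at x.\<close>

definition Fmu :: "(real^'n \<Rightarrow> real^'n) \<Rightarrow> real \<Rightarrow> real^'n \<Rightarrow> real^'n \<Rightarrow> (real^'n) \<times> (real^'n)" where
  "Fmu g mu x l = (g x - l, \<chi> i. l$i * x$i - mu)"

definition Fprime :: "real^'n^'n \<Rightarrow> real^'n \<Rightarrow> real^'n \<Rightarrow> (real^'n) \<times> (real^'n) \<Rightarrow> (real^'n) \<times> (real^'n)" where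
  "Fprime H x l = (\<lambda>(dx, dl). (H *v dx - dl, \<chi> i. l$i * dx$i + x$i * dl$i))"

definition dxS :: "real^'n \<Rightarrow> real^'n^'n \<Rightarrow> real \<Rightarrow> real^'n \<Rightarrow> real^'n \<Rightarrow> 'n \<Rightarrow> real" where
  "dxS gx H mup x l i = - (x$i * gx$i - mup) / (x$i * H$i$i + l$i)"

definition dxC :: "real \<Rightarrow> real^'n \<Rightarrow> real^'n \<Rightarrow> 'n \<Rightarrow> real" where
  "dxC mup x l i = - x$i + mup / l$i"

definition dlC :: "real \<Rightarrow> real^'n \<Rightarrow> real^'n \<Rightarrow> 'n \<Rightarrow> real" where
  "dlC mup x l i = - l$i + mup / x$i"

definition dxAct :: "'n set \<Rightarrow> ('n \<Rightarrow> bool) \<Rightarrow> real^'n \<Rightarrow> real^'n^'n \<Rightarrow> real \<Rightarrow> real^'n \<Rightarrow> real^'n \<Rightarrow> real^'n" where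
  "dxAct A sS gx H mup x l =
     (\<chi> i. if i \<in> A then (if sS i then dxS gx H mup x l i else dxC mup x l i) else 0)"

definition ls_system :: "'n set \<Rightarrow> 'n set \<Rightarrow> real^'n^'n \<Rightarrow> real^'n \<Rightarrow> real \<Rightarrow> real^'n \<Rightarrow> real^'n \<Rightarrow> real^'n \<Rightarrow> real^'n \<Rightarrow> bool" where
  "ls_system I A H gx mup x l dxA y \<longleftrightarrow>
     (\<forall>j. j \<notin> I \<longrightarrow> y$j = 0) \<and>
     (\<forall>i\<in>I. (\<Sum>j\<in>I. (H$i$j + (if i = j then l$i / x$i else 0)) * y$j)
              = - (gx$i + (\<Sum>j\<in>A. H$i$j * dxA$j)) + mup / x$i)"

definition dlb :: "'n set \<Rightarrow> 'n set \<Rightarrow> real^'n^'n \<Rightarrow> real^'n \<Rightarrow> real^'n \<Rightarrow> real^'n \<Rightarrow> 'n \<Rightarrow> real" where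
  "dlb I A H gx l dx i = gx$i - l$i + (\<Sum>j\<in>A. H$i$j * dx$j) + (\<Sum>j\<in>I. H$i$j * dx$j)"

text \<open>Least-squares component on A: (I + X_AA^2)^-1 is diagonal, so componentwise.\<close>
definition dlsA :: "'n set \<Rightarrow> 'n set \<Rightarrow> real^'n^'n \<Rightarrow> real^'n \<Rightarrow> real \<Rightarrow> real^'n \<Rightarrow> real^'n \<Rightarrow> real^'n \<Rightarrow> 'n \<Rightarrow> real" where
  "dlsA I A H gx mup x l dx i =
     (dlb I A H gx l dx i - x$i * (l$i * x$i - mup + l$i * dx$i)) / (1 + (x$i)^2)"

definition dlsI :: "real \<Rightarrow> real^'n \<Rightarrow> real^'n \<Rightarrow> real^'n \<Rightarrow> 'n \<Rightarrow> real" where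
  "dlsI mup x l dx i = - l$i + mup / x$i - (l$i / x$i) * dx$i"

definition dlam :: "'n set \<Rightarrow> 'n set \<Rightarrow> ('n \<Rightarrow> bool) \<Rightarrow> real^'n^'n \<Rightarrow> real^'n \<Rightarrow> real \<Rightarrow> real^'n \<Rightarrow> real^'n \<Rightarrow> real^'n \<Rightarrow> real^'n" where
  "dlam I A sL H gx mup x l dx =
     (\<chi> i. if i \<in> I then (if sL i then dlsI mup x l dx i else dlC mup x l i)
           else if i \<in> A then (if sL i then dlsA I A H gx mup x l dx i else dlb I A H gx l dx i)
           else 0)"

end

theory Submission
  imports Defs
begin

text \<open>Near the central path, a point with \<open>\<parallel>F\<^sub>\<mu>\<parallel> = O(\<mu>)\<close> is within \<open>O(\<mu>)\<close> of \<open>(x\<^sup>*, \<lambda>\<^sup>*)\<close>,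
  so by strict complementarity \<open>x\<^sub>A, \<lambda>\<^sub>I = O(\<mu>)\<close> while \<open>\<lambda>\<^sub>A, x\<^sub>I\<close> stay bounded away from zero,
  and the Newton direction \<open>(p, q)\<close> is \<open>O(\<mu>)\<close> since \<open>F'\<close> is uniformly invertible. Every partial
  approximation solves the Newton equations up to a residual that is a product of two \<open>O(\<mu>)\<close>
  quantities; for \<open>\<Delta>x\<^sub>I\<close> the residual enters through the reduced system
  \<open>H\<^sub>I\<^sub>I + X\<^sub>I\<^sub>I\<^sup>-\<^sup>1\<Lambda>\<^sub>I\<^sub>I\<close>, whose coercivity is inherited from \<open>H(x\<^sup>*)\<^sub>I\<^sub>I\<close>.\<close>

lemma abs_sum_le_card_mult:
  fixes S :: "'n::finite set"
  assumes "\<And>j. j \<in> S \<Longrightarrow> \<bar>f j\<bar> \<le> B" and "0 \<le> B"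
  shows "\<bar>sum f S\<bar> \<le> real CARD('n) * B"
proof -
  have "\<bar>sum f S\<bar> \<le> (\<Sum>j\<in>S. \<bar>f j\<bar>)" by (rule sum_abs)
  also have "\<dots> \<le> real (card S) * B" by (rule sum_bounded_above) (use assms in auto)
  also have "\<dots> \<le> real CARD('n) * B"
    using assms(2) card_mono[of UNIV S] by (intro mult_right_mono) auto
  finally show ?thesis .
qed

lemma norm_le_card_mult_cart:
  fixes v :: "real^'n"
  assumes "\<And>k. \<bar>v$k\<bar> \<le> B" and "0 \<le> B"
  shows "norm v \<le> real CARD('n) * B"
  using norm_le_l1_cart[of v] abs_sum_le_card_mult[of UNIV "\<lambda>k. \<bar>v$k\<bar>" B] assms by simp

lemma matrix_vector_mult_component_bound:
  fixes H :: "real^'n^'m"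
  assumes "\<And>i j. \<bar>H$i$j\<bar> \<le> h" and "\<And>j. \<bar>v$j\<bar> \<le> V" and "0 \<le> V"
  shows "\<bar>(H *v v)$i\<bar> \<le> real CARD('n) * (h * V)"
  unfolding matrix_vector_mult_def vec_lambda_beta
proof (rule abs_sum_le_card_mult)
  have h: "0 \<le> h" using assms(1)[of i] by (meson abs_ge_zero order_trans)
  then show "0 \<le> h * V" using assms(3) by simp
  fix j show "\<bar>H$i$j * v$j\<bar> \<le> h * V"
    unfolding abs_mult using assms(1)[of i j] assms(2)[of j] h by (intro mult_mono) auto
qed

lemma matrix_entry_le_norm:
  fixes H :: "real^'n^'m"
  shows "\<bar>H$i$j\<bar> \<le> norm H"
  by (rule order_trans[OF component_le_norm_cart Finite_Cartesian_Product.norm_nth_le])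

lemma linear_Fprime:
  fixes H :: "real^'n^'n"
  shows "linear (Fprime H x l)"
proof (rule linearI)
  fix u v :: "(real^'n) \<times> (real^'n)"
  show "Fprime H x l (u + v) = Fprime H x l u + Fprime H x l v"
    by (cases u, cases v)
       (simp add: Fprime_def vec_eq_iff algebra_simps)
next
  fix r :: real and u :: "(real^'n) \<times> (real^'n)"
  show "Fprime H x l (r *\<^sub>R u) = r *\<^sub>R Fprime H x l u"
    by (cases u)
       (simp add: Fprime_def vec_eq_iff algebra_simps matrix_vector_mult_def sum_distrib_left)
qed

lemma norm_le_onorm_inv_Fprime:
  fixes H :: "real^'n^'n"
  assumes "bij (Fprime H x l)" and "onorm (inv (Fprime H x l)) \<le> M"
  shows "norm v \<le> M * norm (Fprime H x l v)"
proof -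
  let ?T = "Fprime H x l"
  have "bounded_linear (inv ?T)"
    using inj_linear_imp_inv_bounded_linear linear_Fprime linear_linear assms(1) bij_is_inj
    by blast
  moreover have "v = inv ?T (?T v)" using assms(1) by (simp add: bij_is_inj)
  ultimately have "norm v \<le> onorm (inv ?T) * norm (?T v)" by (metis onorm)
  also have "\<dots> \<le> M * norm (?T v)" using assms(2) by (rule mult_right_mono) simp
  finally show ?thesis .
qed

lemma gradient_linearization_error:
  fixes grad :: "real^'n \<Rightarrow> real^'n" and hess :: "real^'n \<Rightarrow> real^'n^'n"
  assumes f_hess: "\<And>x. (grad has_derivative (\<lambda>h. hess x *v h)) (at x)"
    and hess_near: "\<And>u. norm (u - z) < r \<Longrightarrow> norm (hess u - hess z) < \<epsilon>"
    and x: "norm (x - z) < r" and y: "norm (y - z) < r"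
  shows "norm (grad x - grad y - hess y *v (x - y))
           \<le> real CARD('n) * real CARD('n) * (2*\<epsilon>) * norm (x - y)"
proof -
  have in_ball: "u \<in> ball z r \<longleftrightarrow> norm (u - z) < r" for u
    by (simp add: dist_norm norm_minus_commute)
  define g where "g u = grad u - hess y *v u" for u
  have "(g has_derivative (\<lambda>h. hess u *v h - hess y *v h)) (at u within ball z r)" for u
  proof -
    have "((\<lambda>u. hess y *v u) has_derivative (\<lambda>h. hess y *v h)) (at u)"
      by (rule bounded_linear_imp_has_derivative) simp
    from has_derivative_diff[OF f_hess[of u] this] show ?thesis
      unfolding g_def by (rule has_derivative_at_withinI)
  qed
  moreover have "onorm (\<lambda>h. hess u *v h - hess y *v h) \<le> real CARD('n) * real CARD('n) * (2*\<epsilon>)"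
    if "u \<in> ball z r" for u
  proof -
    have "norm (hess u - hess y) \<le> norm (hess u - hess z) + norm (hess y - hess z)"
      by (metis norm_diff_triangle_le norm_minus_commute order_refl)
    also have "\<dots> < 2*\<epsilon>"
      using hess_near[of u] hess_near[OF y] that unfolding in_ball by linarith
    finally have "\<bar>(hess u - hess y)$i$j\<bar> \<le> 2*\<epsilon>" for i j
      using matrix_entry_le_norm[of "hess u - hess y" i j] by linarith
    then have "onorm ((*v) (hess u - hess y)) \<le> real CARD('n) * real CARD('n) * (2*\<epsilon>)"
      by (rule onorm_le_matrix_component)
    moreover have "(\<lambda>h. hess u *v h - hess y *v h) = (*v) (hess u - hess y)"
      by (simp add: fun_eq_iff matrix_vector_mult_diff_rdistrib)
    ultimately show ?thesis by simp
  qed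
  ultimately have "norm (g x - g y) \<le> real CARD('n) * real CARD('n) * (2*\<epsilon>) * norm (x - y)"
    using x y in_ball by (intro differentiable_bound[of "ball z r"]) auto
  moreover have "g x - g y = grad x - grad y - hess y *v (x - y)"
    by (simp add: g_def matrix_vector_mult_diff_distrib)
  ultimately show ?thesis by simp
qed

definition quad_form_on :: "'n set \<Rightarrow> real^'n^'n \<Rightarrow> real^'n \<Rightarrow> real" where
  "quad_form_on I H v = (\<Sum>i\<in>I. \<Sum>j\<in>I. v$i * H$i$j * v$j)"

lemma quad_form_on_scale: "quad_form_on I H (t *\<^sub>R v) = t^2 * quad_form_on I H v"
  unfolding quad_form_on_def by (simp add: sum_distrib_left algebra_simps power2_eq_square)

text \<open>Positive definiteness on the coordinate subspace \<open>v\<^sub>A = 0\<close> is upgraded to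
  coercivity by minimising the form over the (compact) unit sphere of that subspace.\<close>
lemma quad_form_on_coercive:
  fixes H :: "real^'n^'n"
  assumes pd: "\<And>v. v \<noteq> 0 \<Longrightarrow> (\<forall>j\<in>A. v$j = 0) \<Longrightarrow> quad_form_on I H v > 0"
  obtains c where "c > 0" "\<And>v. \<forall>j\<in>A. v$j = 0 \<Longrightarrow> c * (norm v)^2 \<le> quad_form_on I H v"
proof -
  define S where "S = sphere (0::real^'n) 1 \<inter> (\<Inter>j\<in>A. {v. v$j = 0})"
  have unit_in_S: "(1 / norm v) *\<^sub>R v \<in> S" if "v \<noteq> 0" "\<forall>j\<in>A. v$j = 0" for v
    using that by (simp add: S_def norm_sgn)
  show ?thesis
  proof (cases "S = {}")
    case True
    then have zero: "v = 0" if "\<forall>j\<in>A. v$j = 0" for v :: "real^'n"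
      using unit_in_S that by blast
    have "1 * (norm v)^2 \<le> quad_form_on I H v" if "\<forall>j\<in>A. v$j = 0" for v
      using zero[OF that] by (simp add: quad_form_on_def)
    then show ?thesis by (intro that[of 1]) auto
  next
    case False
    have "compact S" unfolding S_def
      by (intro compact_Int_closed compact_sphere closed_INT ballI closed_Collect_eq
          continuous_intros)
    moreover have "continuous_on S (quad_form_on I H)"
      unfolding quad_form_on_def by (intro continuous_intros)
    ultimately obtain v0 where v0: "v0 \<in> S" "\<And>v. v \<in> S \<Longrightarrow> quad_form_on I H v0 \<le> quad_form_on I H v"
      using continuous_attains_inf[OF _ False] by blast
    then have "v0 \<noteq> 0" "\<forall>j\<in>A. v0$j = 0" by (auto simp: S_def)
    then have pos: "quad_form_on I H v0 > 0" by (rule pd)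
    have "quad_form_on I H v0 * (norm v)^2 \<le> quad_form_on I H v" if "\<forall>j\<in>A. v$j = 0" for v
    proof (cases "v = 0")
      case False
      have "quad_form_on I H v = (norm v)^2 * quad_form_on I H ((1 / norm v) *\<^sub>R v)"
        using False quad_form_on_scale[of I H "norm v" "(1 / norm v) *\<^sub>R v"] by simp
      then show ?thesis using v0(2)[OF unit_in_S[OF False that]]
        by (metis mult.commute mult_left_mono zero_le_power2)
    qed (simp add: quad_form_on_def)
    then show ?thesis using that pos by blast
  qed
qed

lemma quad_form_on_coercive_perturb:
  fixes H H0 :: "real^'n^'n"
  assumes coercive: "c * (norm v)^2 \<le> quad_form_on I H0 v"
    and close: "\<And>i j. \<bar>H$i$j - H0$i$j\<bar> \<le> e" and small: "real CARD('n)^2 * e \<le> c/2"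
  shows "c/2 * (norm v)^2 \<le> quad_form_on I H v"
proof -
  define N where "N = real CARD('n)"
  have e: "0 \<le> e" using close[of undefined undefined] by linarith
  have "\<bar>\<Sum>j\<in>I. v$i * (H$i$j - H0$i$j) * v$j\<bar> \<le> N * (norm v * e * norm v)" for i
    unfolding N_def
  proof (rule abs_sum_le_card_mult)
    fix j show "\<bar>v$i * (H$i$j - H0$i$j) * v$j\<bar> \<le> norm v * e * norm v"
      unfolding abs_mult
      using component_le_norm_cart[of v i] component_le_norm_cart[of v j] close[of i j] e
      by (intro mult_mono) auto
  qed (use e in simp)
  then have "\<bar>\<Sum>i\<in>I. \<Sum>j\<in>I. v$i * (H$i$j - H0$i$j) * v$j\<bar> \<le> N * (N * (norm v * e * norm v))"
    unfolding N_def by (rule abs_sum_le_card_mult) (auto simp: N_def e)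
  moreover have "(\<Sum>i\<in>I. \<Sum>j\<in>I. v$i * (H$i$j - H0$i$j) * v$j)
      = quad_form_on I H v - quad_form_on I H0 v"
    unfolding quad_form_on_def by (simp add: sum_subtractf[symmetric] algebra_simps)
  moreover have "N * (N * (norm v * e * norm v)) \<le> c/2 * (norm v)^2"
    using mult_right_mono[OF small, of "(norm v)^2"]
    by (simp add: N_def power2_eq_square algebra_simps)
  ultimately show ?thesis using coercive by linarith
qed

lemma Fmu_expansion:
  fixes hess :: "real^'n \<Rightarrow> real^'n^'n"
  shows "Fmu grad \<mu> x l = Fmu grad \<mu> xm lm + Fprime (hess xm) xm lm (x - xm, l - lm)
           + (grad x - grad xm - hess xm *v (x - xm), \<chi> i. (l - lm)$i * (x - xm)$i)"
  by (simp add: Fmu_def Fprime_def vec_eq_iff algebra_simps)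

text \<open>Inverting \<open>F'\<close> at the central point in this expansion gives
  \<open>d \<le> M (C1 \<mu> + d/4 + d/4)\<close> for the distance \<open>d\<close>: the linearization error of the gradient
  and the quadratic term are absorbed since the Hessian varies little and \<open>d\<close> is small.\<close>
lemma dist_to_central_point:
  fixes grad :: "real^'n \<Rightarrow> real^'n" and hess :: "real^'n \<Rightarrow> real^'n^'n"
  assumes f_hess: "\<And>x. (grad has_derivative (\<lambda>h. hess x *v h)) (at x)"
    and hess_near: "\<And>u. norm (u - z) < r \<Longrightarrow> norm (hess u - hess z) < \<epsilon>"
    and x: "norm (x - z) < r" and xm: "norm (xm - z) < r"
    and central: "Fmu grad \<mu> xm lm = 0"
    and inv_bound: "\<And>v. norm v \<le> M * norm (Fprime (hess xm) xm lm v)" and M: "0 \<le> M"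
    and hess_small: "M * (real CARD('n) * real CARD('n) * (2*\<epsilon>)) \<le> 1/4"
    and dist_small: "M * real CARD('n) * norm ((x, l) - (xm, lm)) \<le> 1/4"
    and residual: "norm (Fmu grad \<mu> x l) \<le> C1 * \<mu>"
  shows "norm ((x, l) - (xm, lm)) \<le> 2 * M * C1 * \<mu>"
proof -
  define N where "N = real CARD('n)"
  define B where "B = N * N * (2*\<epsilon>)"
  define d where "d = norm ((x, l) - (xm, lm))"
  define R1 where "R1 = grad x - grad xm - hess xm *v (x - xm)"
  define R2 where "R2 = (\<chi> i. (l - lm)$i * (x - xm)$i)"
  have dx: "norm (x - xm) \<le> d" and dl: "norm (l - lm) \<le> d"
    using norm_fst_le[of "x - xm" "l - lm"] norm_snd_le[of "l - lm" "x - xm"]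
    by (simp_all add: d_def)
  have "0 < \<epsilon>" using hess_near[OF x] by (meson norm_ge_zero order_le_less_trans)
  then have "B * norm (x - xm) \<le> B * d"
    using dx by (intro mult_left_mono) (simp_all add: B_def N_def)
  moreover have "norm R1 \<le> B * norm (x - xm)"
    using gradient_linearization_error[OF f_hess hess_near x xm] by (simp add: R1_def B_def N_def)
  ultimately have "norm R1 \<le> B * d" by linarith
  moreover have "norm R2 \<le> N * (d * d)"
    unfolding N_def
  proof (rule norm_le_card_mult_cart)
    fix i
    have "\<bar>(l - lm)$i\<bar> \<le> d" "\<bar>(x - xm)$i\<bar> \<le> d"
      using component_le_norm_cart[of "l - lm" i] component_le_norm_cart[of "x - xm" i] dx dl
      by linarith+
    then show "\<bar>R2$i\<bar> \<le> d * d" by (simp add: R2_def abs_mult mult_mono)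
  qed simp
  moreover have "Fprime (hess xm) xm lm (x - xm, l - lm) = Fmu grad \<mu> x l - (R1, R2)"
    using Fmu_expansion[of grad \<mu> x l xm lm hess] central by (simp add: R1_def R2_def)
  then have "norm (Fprime (hess xm) xm lm (x - xm, l - lm))
      \<le> norm (Fmu grad \<mu> x l) + norm R1 + norm R2"
    using norm_triangle_ineq4[of "Fmu grad \<mu> x l" "(R1, R2)"] norm_Pair_le[of R1 R2] by simp
  ultimately have "norm (Fprime (hess xm) xm lm (x - xm, l - lm)) \<le> C1 * \<mu> + B * d + N * (d * d)"
    using residual by linarith
  then have "d \<le> M * (C1 * \<mu> + B * d + N * (d * d))"
    using inv_bound[of "(x - xm, l - lm)"] mult_left_mono[OF _ M] by (fastforce simp: d_def)
  also have "\<dots> = M * C1 * \<mu> + (M * B) * d + (M * N * d) * d" by (simp add: algebra_simps)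
  also have "\<dots> \<le> M * C1 * \<mu> + d/4 + d/4"
    using mult_right_mono[OF hess_small, of d] mult_right_mono[OF dist_small, of d]
    by (simp add: B_def N_def d_def)
  finally show ?thesis by (simp add: d_def)
qed

definition active_primal_err :: "nat \<Rightarrow> real \<Rightarrow> real \<Rightarrow> real \<Rightarrow> real" where
  "active_primal_err n a h m = (2 * (real n + 1) * h + 1) * a^2 / m"

definition primal_err :: "nat \<Rightarrow> real \<Rightarrow> real \<Rightarrow> real \<Rightarrow> real \<Rightarrow> real" where
  "primal_err n a h m c = active_primal_err n a h m + real n^2 * h * active_primal_err n a h m / c"

definition dual_err :: "nat \<Rightarrow> real \<Rightarrow> real \<Rightarrow> real \<Rightarrow> real \<Rightarrow> real \<Rightarrow> real" where
  "dual_err n a h m c lb = a * primal_err n a h m c / m + a^2 / m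
     + real n * h * primal_err n a h m c + a * lb * primal_err n a h m c"

definition step_err :: "nat \<Rightarrow> real \<Rightarrow> real \<Rightarrow> real \<Rightarrow> real \<Rightarrow> real \<Rightarrow> real" where
  "step_err n a h m c lb = real n * (primal_err n a h m c + dual_err n a h m c lb)"

locale newton_comparison =
  fixes H :: "real^'n^'n" and x l g p q :: "real^'n" and A I :: "'n set"
    and mup \<mu> a h m c lb :: real
  assumes partition: "A \<inter> I = {}" "A \<union> I = UNIV"
    and x_pos: "\<And>i. x$i > 0" and l_pos: "\<And>i. l$i > 0"
    and \<mu>: "0 < \<mu>" "\<mu> \<le> 1"
    and newton_grad: "\<And>i. (H *v p)$i - q$i = l$i - g$i"
    and newton_compl: "\<And>i. l$i * p$i + x$i * q$i = mup - l$i * x$i"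
    and x_active: "\<And>i. i \<in> A \<Longrightarrow> x$i \<le> a * \<mu>" and l_active: "\<And>i. i \<in> A \<Longrightarrow> m \<le> l$i"
    and x_inactive: "\<And>i. i \<in> I \<Longrightarrow> m \<le> x$i" and l_inactive: "\<And>i. i \<in> I \<Longrightarrow> l$i \<le> a * \<mu>"
    and m: "m > 0" and a: "a \<ge> 0"
    and l_bound: "\<And>i. l$i \<le> lb"
    and H_bound: "\<And>i j. \<bar>H$i$j\<bar> \<le> h"
    and p_bound: "\<And>i. \<bar>p$i\<bar> \<le> a * \<mu>" and q_bound: "\<And>i. \<bar>q$i\<bar> \<le> a * \<mu>"
    and diag_active: "\<And>i. i \<in> A \<Longrightarrow> m/2 \<le> x$i * H$i$i + l$i"
    and coercive: "\<And>v. \<forall>j\<in>A. v$j = 0 \<Longrightarrow> c * (norm v)^2 \<le> quad_form_on I H v"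
    and c: "c > 0"
begin

lemma h_nonneg: "0 \<le> h" using H_bound[of undefined undefined] by linarith

lemma lb_nonneg: "0 \<le> lb" using l_pos[of undefined] l_bound[of undefined] by linarith

lemma err_nonneg:
  "0 \<le> active_primal_err CARD('n) a h m" "0 \<le> primal_err CARD('n) a h m c"
  "0 \<le> dual_err CARD('n) a h m c lb"
  using h_nonneg m c a lb_nonneg
  by (simp_all add: active_primal_err_def primal_err_def dual_err_def)

lemma newton_row_scaled: "x$i * (H *v p)$i + l$i * p$i = mup - x$i * g$i"
  using arg_cong[OF newton_grad[of i], of "(*) (x$i)"] newton_compl[of i]
  by (simp add: algebra_simps)

lemma diag_active_nonzero: "i \<in> A \<Longrightarrow> x$i * H$i$i + l$i \<noteq> 0"
  using diag_active[of i] m by fastforce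

lemma sum_partition: "sum f UNIV = sum f A + sum f I"
  using sum.union_disjoint[of A I f] partition by simp

text \<open>Both active choices are exact for one row of the Newton system up to an \<open>O(\<mu>\<^sup>2)\<close>
  term: \<open>\<Delta>x\<^sup>S\<close> drops the off-diagonal part \<open>x\<^sub>i (H p - H\<^sub>i\<^sub>i p\<^sub>i)\<close> of the first row multiplied
  by \<open>x\<^sub>i\<close>, \<open>\<Delta>x\<^sup>C\<close> drops \<open>x\<^sub>i q\<^sub>i\<close> in the complementarity row.\<close>
lemma dxAct_error:
  assumes i: "i \<in> A"
  shows "\<bar>dxAct A sS g H mup x l $ i - p$i\<bar> \<le> active_primal_err CARD('n) a h m * \<mu>^2"
proof -
  define N where "N = real CARD('n)"
  have xi: "0 < x$i" "x$i \<le> a * \<mu>" using x_pos x_active i by auto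
  have a\<mu>: "0 \<le> a * \<mu>" using a \<mu> by simp
  show ?thesis
  proof (cases "sS i")
    case True
    define den where "den = x$i * H$i$i + l$i"
    have den: "m/2 \<le> den" "0 < den" using diag_active[OF i] m by (simp_all add: den_def)
    have "dxAct A sS g H mup x l $ i - p$i = x$i * ((H *v p)$i - H$i$i * p$i) / den"
      using i True den(2) newton_row_scaled[of i]
      by (simp add: dxAct_def dxS_def den_def field_simps)
    moreover have "\<bar>x$i * ((H *v p)$i - H$i$i * p$i)\<bar> \<le> (a * \<mu>) * ((N + 1) * (h * (a * \<mu>)))"
    proof -
      have "\<bar>(H *v p)$i\<bar> \<le> N * (h * (a * \<mu>))"
        unfolding N_def by (rule matrix_vector_mult_component_bound[OF H_bound p_bound a\<mu>])
      moreover have "\<bar>H$i$i * p$i\<bar> \<le> h * (a * \<mu>)"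
        unfolding abs_mult using H_bound[of i i] p_bound[of i] h_nonneg by (intro mult_mono) auto
      ultimately have "\<bar>(H *v p)$i - H$i$i * p$i\<bar> \<le> (N + 1) * (h * (a * \<mu>))"
        using abs_triangle_ineq4[of "(H *v p)$i" "H$i$i * p$i"] by (simp add: algebra_simps)
      then show ?thesis
        unfolding abs_mult using xi by (intro mult_mono) auto
    qed
    ultimately have "\<bar>dxAct A sS g H mup x l $ i - p$i\<bar>
        \<le> (a * \<mu>) * ((N + 1) * (h * (a * \<mu>))) / (m/2)"
      using den m by (simp only: abs_divide abs_of_pos[OF den(2)]) (rule frac_le; simp)
    also have "\<dots> \<le> active_primal_err CARD('n) a h m * \<mu>^2"
      using m a \<mu> h_nonneg by (simp add: active_primal_err_def N_def field_simps power2_eq_square)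
    finally show ?thesis .
  next
    case False
    have li: "m \<le> l$i" "0 < l$i" using l_active[OF i] l_pos by auto
    have "dxAct A sS g H mup x l $ i - p$i = x$i * q$i / l$i"
      using i False li newton_compl[of i] by (simp add: dxAct_def dxC_def field_simps)
    moreover have "\<bar>x$i * q$i\<bar> \<le> (a * \<mu>) * (a * \<mu>)"
      unfolding abs_mult using xi q_bound[of i] by (intro mult_mono) auto
    ultimately have "\<bar>dxAct A sS g H mup x l $ i - p$i\<bar> \<le> (a * \<mu>) * (a * \<mu>) / m"
      using li m by (simp only: abs_divide abs_of_pos[OF li(2)]) (rule frac_le; simp)
    also have "\<dots> \<le> active_primal_err CARD('n) a h m * \<mu>^2"
      using m h_nonneg a \<mu> by (simp add: active_primal_err_def field_simps power2_eq_square)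
    finally show ?thesis .
  qed
qed

definition reduced_row :: "real^'n \<Rightarrow> 'n \<Rightarrow> real" where
  "reduced_row v i = (\<Sum>j\<in>I. (H$i$j + (if i = j then l$i / x$i else 0)) * v$j)"

lemma reduced_row_eq: "i \<in> I \<Longrightarrow> reduced_row v i = (\<Sum>j\<in>I. H$i$j * v$j) + l$i / x$i * v$i"
  by (simp add: reduced_row_def distrib_right sum.distrib if_distrib[of "\<lambda>t. t * _"] cong: if_cong)

lemma reduced_row_diff: "reduced_row (v - w) i = reduced_row v i - reduced_row w i"
  by (simp add: reduced_row_def sum_subtractf[symmetric] algebra_simps)

lemma ls_system_iff:
  "ls_system I A H g mup x l dxA y \<longleftrightarrow> (\<forall>j. j \<notin> I \<longrightarrow> y$j = 0) \<and>
     (\<forall>i\<in>I. reduced_row y i = - (g$i + (\<Sum>j\<in>A. H$i$j * dxA$j)) + mup / x$i)"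
  by (simp add: ls_system_def reduced_row_def)

lemma reduced_form_coercive:
  assumes "\<forall>j\<in>A. v$j = 0"
  shows "c * (norm v)^2 \<le> (\<Sum>i\<in>I. v$i * reduced_row v i)"
proof -
  have "(\<Sum>i\<in>I. v$i * reduced_row v i) = quad_form_on I H v + (\<Sum>i\<in>I. l$i / x$i * (v$i)^2)"
    by (simp add: reduced_row_eq quad_form_on_def sum.distrib sum_distrib_left algebra_simps
        power2_eq_square)
  moreover have "0 \<le> (\<Sum>i\<in>I. l$i / x$i * (v$i)^2)"
    using x_pos l_pos by (intro sum_nonneg) (simp add: less_imp_le)
  ultimately show ?thesis using coercive[OF assms] by linarith
qed

definition reduced_op :: "real^'n \<Rightarrow> real^'n" where
  "reduced_op v = (\<chi> i. if i \<in> I then reduced_row v i else v$i)"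

lemma linear_reduced_op: "linear reduced_op"
  by (rule linearI) (simp_all add: reduced_op_def reduced_row_def vec_eq_iff
      sum.distrib sum_distrib_left algebra_simps)

lemma inj_reduced_op: "inj reduced_op"
proof -
  have "v = 0" if "reduced_op v = 0" for v
  proof -
    have row: "reduced_op v $ i = 0" for i using that by simp
    have "v$j = 0" if "j \<notin> I" for j
      using row[of j] that by (simp add: reduced_op_def)
    moreover have "reduced_row v i = 0" if "i \<in> I" for i
      using row[of i] that by (simp add: reduced_op_def)
    ultimately have "c * (norm v)^2 \<le> 0"
      using reduced_form_coercive[of v] partition(1) by fastforce
    then show "v = 0" using c by (simp add: mult_le_0_iff)
  qed
  then show ?thesis using linear_injective_0[OF linear_reduced_op] by blast
qed

lemma ls_system_unique: "\<exists>!y. ls_system I A H g mup x l dxA y"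
proof -
  define b where "b = (\<chi> i. if i \<in> I then - (g$i + (\<Sum>j\<in>A. H$i$j * dxA$j)) + mup / x$i else 0)"
  have "ls_system I A H g mup x l dxA y \<longleftrightarrow> reduced_op y = b" for y
    by (auto simp: ls_system_iff reduced_op_def b_def vec_eq_iff split: if_splits)
  moreover have "\<exists>!y. reduced_op y = b"
    using linear_injective_imp_surjective[OF linear_reduced_op inj_reduced_op refl] inj_reduced_op
    by (metis injD surjD)
  ultimately show ?thesis by simp
qed

lemma newton_reduced_row:
  assumes "i \<in> I"
  shows "reduced_row p i = - (g$i + (\<Sum>j\<in>A. H$i$j * p$j)) + mup / x$i"
proof -
  have "(H *v p)$i = (\<Sum>j\<in>A. H$i$j * p$j) + (\<Sum>j\<in>I. H$i$j * p$j)"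
    unfolding matrix_vector_mult_def vec_lambda_beta by (rule sum_partition)
  then show ?thesis
    using reduced_row_eq[OF assms] newton_row_scaled[of i] x_pos[of i]
    by (simp add: field_simps)
qed

text \<open>On \<open>I\<close> the error \<open>w\<close> solves the reduced system with right-hand side
  \<open>-H\<^sub>I\<^sub>A (\<Delta>x\<^sub>A - p\<^sub>A) = O(\<mu>\<^sup>2)\<close>, and coercivity turns this into \<open>\<parallel>w\<parallel> = O(\<mu>\<^sup>2)\<close>.\<close>
lemma dx_error:
  assumes y: "ls_system I A H g mup x l (dxAct A sS g H mup x l) y"
  shows "\<bar>(dxAct A sS g H mup x l + y)$k - p$k\<bar> \<le> primal_err CARD('n) a h m c * \<mu>^2"
proof -
  define N where "N = real CARD('n)"
  define eA where "eA = active_primal_err CARD('n) a h m * \<mu>^2"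
  define dA where "dA = dxAct A sS g H mup x l"
  define w where "w = (\<chi> j. if j \<in> I then y$j - p$j else 0)"
  have eA: "0 \<le> eA" using err_nonneg by (simp add: eA_def)
  have dA_inactive: "dA$j = 0" if "j \<in> I" for j
    using that partition(1) by (auto simp: dA_def dxAct_def)
  have y_active: "y$j = 0" if "j \<in> A" for j
    using that partition(1) y by (auto simp: ls_system_def)
  have active_err: "\<bar>dA$j - p$j\<bar> \<le> eA" if "j \<in> A" for j
    unfolding dA_def eA_def using dxAct_error[OF that] .
  have w_active: "\<forall>j\<in>A. w$j = 0" using partition(1) by (auto simp: w_def)
  have w_row: "reduced_row w i = - (\<Sum>j\<in>A. H$i$j * (dA$j - p$j))" if "i \<in> I" for i
  proof -
    have "reduced_row w i = reduced_row y i - reduced_row p i"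
      unfolding reduced_row_diff[symmetric] by (simp add: reduced_row_def w_def)
    also have "\<dots> = - ((\<Sum>j\<in>A. H$i$j * dA$j) - (\<Sum>j\<in>A. H$i$j * p$j))"
      using y that newton_reduced_row[OF that] by (simp add: ls_system_iff dA_def)
    finally show ?thesis by (simp add: sum_subtractf[symmetric] right_diff_distrib)
  qed
  have row_bound: "\<bar>reduced_row w i\<bar> \<le> N * (h * eA)" if "i \<in> I" for i
    unfolding w_row[OF that] abs_minus_cancel N_def
  proof (rule abs_sum_le_card_mult)
    fix j assume "j \<in> A" then show "\<bar>H$i$j * (dA$j - p$j)\<bar> \<le> h * eA"
      unfolding abs_mult using H_bound[of i j] active_err h_nonneg by (intro mult_mono) auto
  qed (use h_nonneg eA in simp)
  have "c * (norm w)^2 \<le> (\<Sum>i\<in>I. w$i * reduced_row w i)"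
    by (rule reduced_form_coercive[OF w_active])
  also have "\<dots> \<le> N * (norm w * (N * (h * eA)))"
    unfolding N_def
  proof (rule order_trans[OF abs_ge_self abs_sum_le_card_mult])
    fix i assume "i \<in> I"
    then show "\<bar>w$i * reduced_row w i\<bar> \<le> norm w * (real CARD('n) * (h * eA))"
      unfolding abs_mult using component_le_norm_cart[of w i] row_bound[of i]
      by (intro mult_mono) (auto simp: N_def)
  qed (use h_nonneg eA in simp)
  finally have "c * norm w * norm w \<le> (N^2 * h * eA) * norm w"
    by (simp add: algebra_simps power2_eq_square)
  then have w_bound: "norm w \<le> N^2 * h * eA / c"
    using c h_nonneg eA by (cases "norm w = 0") (simp_all add: field_simps)
  have split: "primal_err CARD('n) a h m c * \<mu>^2 = eA + N^2 * h * eA / c"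
    by (simp add: primal_err_def eA_def N_def algebra_simps)
  have "0 \<le> N^2 * h * eA / c" using h_nonneg eA c by simp
  show ?thesis
  proof (cases "k \<in> A")
    case True
    then show ?thesis using active_err[OF True] y_active[OF True] split \<open>0 \<le> N^2 * h * eA / c\<close>
      unfolding dA_def by simp
  next
    case False
    then have "k \<in> I" using partition(2) by auto
    then have "(dA + y)$k - p$k = w$k" using dA_inactive by (simp add: w_def)
    then have "\<bar>(dA + y)$k - p$k\<bar> \<le> N^2 * h * eA / c"
      using component_le_norm_cart[of w k] w_bound by simp
    then show ?thesis using eA split unfolding dA_def by linarith
  qed
qed

lemma dlb_error:
  assumes "k \<in> A" and dx: "\<And>j. \<bar>dx$j - p$j\<bar> \<le> e" and "0 \<le> e"
  shows "\<bar>dlb I A H g l dx k - q$k\<bar> \<le> real CARD('n) * (h * e)"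
proof -
  have "dlb I A H g l dx k = g$k - l$k + (H *v dx)$k"
    unfolding dlb_def matrix_vector_mult_def vec_lambda_beta sum_partition by simp
  then have "dlb I A H g l dx k - q$k = (H *v (dx - p))$k"
    using newton_grad[of k] by (simp add: matrix_vector_mult_diff_distrib)
  also have "\<bar>\<dots>\<bar> \<le> real CARD('n) * (h * e)"
    using assms by (intro matrix_vector_mult_component_bound[OF H_bound]) simp_all
  finally show ?thesis .
qed

text \<open>The four admissible choices of \<open>\<Delta>\<lambda>\<^sub>k\<close> differ from \<open>q\<^sub>k\<close> by \<open>l\<^sub>k/x\<^sub>k (\<Delta>x\<^sub>k - p\<^sub>k)\<close>
  (least squares on \<open>I\<close>), \<open>l\<^sub>k/x\<^sub>k p\<^sub>k\<close> (\<open>\<Delta>\<lambda>\<^sup>C\<close> on \<open>I\<close>), \<open>(H (\<Delta>x - p))\<^sub>k\<close> (\<open>\<Delta>\<lambda>\<^sup>b\<close> on \<open>A\<close>), and the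
  latter damped by \<open>1 + x\<^sub>k\<^sup>2\<close> plus \<open>x\<^sub>k l\<^sub>k (\<Delta>x\<^sub>k - p\<^sub>k)\<close> (least squares on \<open>A\<close>).\<close>
lemma dlam_error:
  assumes dx: "\<And>j. \<bar>dx$j - p$j\<bar> \<le> e" and e: "0 \<le> e"
  shows "\<bar>dlam I A sL H g mup x l dx $ k - q$k\<bar>
           \<le> a * \<mu> / m * e + a^2 / m * \<mu>^2 + real CARD('n) * (h * e) + a * lb * e"
proof -
  have xk: "x$k > 0" and lk: "l$k > 0" using x_pos l_pos by auto
  have qk: "q$k = (mup - l$k * x$k - l$k * p$k) / x$k"
    using newton_compl[of k] xk by (simp add: field_simps)
  have t1: "0 \<le> a * \<mu> / m * e" and t2: "0 \<le> a^2 / m * \<mu>^2"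
    and t3: "0 \<le> real CARD('n) * (h * e)" and t4: "0 \<le> a * lb * e"
    using a m \<mu> h_nonneg lb_nonneg e by simp_all
  show ?thesis
  proof (cases "k \<in> I")
    case kI: True
    have lx: "l$k / x$k \<le> a * \<mu> / m" "0 \<le> l$k / x$k"
      using l_inactive[OF kI] x_inactive[OF kI] lk xk m by (auto intro: frac_le)
    show ?thesis
    proof (cases "sL k")
      case True
      have "dlam I A sL H g mup x l dx $ k - q$k = - (l$k / x$k) * (dx$k - p$k)"
        using kI True xk unfolding dlam_def dlsI_def qk by (simp add: field_simps)
      then have "\<bar>dlam I A sL H g mup x l dx $ k - q$k\<bar> = (l$k / x$k) * \<bar>dx$k - p$k\<bar>"
        using xk lk by (simp add: abs_mult)
      also have "\<dots> \<le> a * \<mu> / m * e"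
        using lx dx[of k] by (intro mult_mono) auto
      finally show ?thesis using t2 t3 t4 by linarith
    next
      case False
      have "dlam I A sL H g mup x l dx $ k - q$k = (l$k / x$k) * p$k"
        using kI False xk unfolding dlam_def dlC_def qk by (simp add: field_simps)
      then have "\<bar>dlam I A sL H g mup x l dx $ k - q$k\<bar> = (l$k / x$k) * \<bar>p$k\<bar>"
        using xk lk by (simp add: abs_mult)
      also have "\<dots> \<le> (a * \<mu> / m) * (a * \<mu>)"
        using lx p_bound[of k] a \<mu> by (intro mult_mono) auto
      also have "\<dots> = a^2 / m * \<mu>^2" by (simp add: field_simps power2_eq_square)
      finally show ?thesis using t1 t3 t4 by linarith
    qed
  next
    case False
    then have kA: "k \<in> A" using partition(2) by auto
    note dlb = dlb_error[OF kA dx e]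
    show ?thesis
    proof (cases "sL k")
      case True
      have pos: "1 + (x$k)^2 > 0" by (simp add: add_pos_nonneg)
      have "x$k \<le> a" using x_active[OF kA] \<mu> a by (meson mult_left_le order_trans)
      then have xlb: "\<bar>x$k * l$k * (dx$k - p$k)\<bar> \<le> a * lb * e"
        unfolding abs_mult using xk lk l_bound[of k] dx[of k] a by (intro mult_mono) auto
      define u where "u = (dlb I A H g l dx k - q$k) - x$k * l$k * (dx$k - p$k)"
      have "dlsA I A H g mup x l dx k - q$k = u / (1 + (x$k)^2)"
        using arg_cong[OF newton_compl[of k], of "(*) (x$k)"] pos
        by (simp add: dlsA_def u_def field_simps power2_eq_square)
      also have "\<bar>\<dots>\<bar> \<le> \<bar>u\<bar>"
        using pos by (simp add: divide_le_eq algebra_simps)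
      also have "\<dots> \<le> \<bar>dlb I A H g l dx k - q$k\<bar> + \<bar>x$k * l$k * (dx$k - p$k)\<bar>"
        unfolding u_def by (rule abs_triangle_ineq4)
      finally show ?thesis
        using kA False True dlb xlb t1 t2 by (simp add: dlam_def)
    next
      case False': False
      then show ?thesis using kA False dlb t1 t2 t4 by (simp add: dlam_def)
    qed
  qed
qed

lemma approx_step_error:
  assumes y: "ls_system I A H g mup x l (dxAct A sS g H mup x l) y"
  defines "dx \<equiv> dxAct A sS g H mup x l + y"
  shows "norm ((dx, dlam I A sL H g mup x l dx) - (p, q)) \<le> step_err CARD('n) a h m c lb * \<mu>^2"
proof -
  define N where "N = real CARD('n)"
  define ex where "ex = primal_err CARD('n) a h m c"
  have ex: "0 \<le> ex" using err_nonneg by (simp add: ex_def)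
  have dx: "\<bar>dx$j - p$j\<bar> \<le> ex * \<mu>^2" for j
    unfolding dx_def ex_def by (rule dx_error[OF y])
  have "a * \<mu> / m * (ex * \<mu>^2) \<le> a * ex / m * \<mu>^2"
    using mult_right_mono[OF \<mu>(2), of "a * ex / m * \<mu>^2"] a m ex by (simp add: field_simps)
  then have "\<bar>dlam I A sL H g mup x l dx $ k - q$k\<bar> \<le> dual_err CARD('n) a h m c lb * \<mu>^2" for k
    using dlam_error[OF dx, where k=k and sL=sL] ex
    by (simp add: dual_err_def ex_def algebra_simps)
  then have "norm (dlam I A sL H g mup x l dx - q) \<le> N * (dual_err CARD('n) a h m c lb * \<mu>^2)"
    using err_nonneg unfolding N_def by (intro norm_le_card_mult_cart) simp_all
  moreover have "norm (dx - p) \<le> N * (ex * \<mu>^2)"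
    using dx ex unfolding N_def by (intro norm_le_card_mult_cart) simp_all
  ultimately show ?thesis
    using norm_Pair_le[of "dx - p" "dlam I A sL H g mup x l dx - q"]
    by (simp add: step_err_def N_def ex_def algebra_simps)
qed

end

text \<open>Besides the hypotheses of the theorem: a coercivity constant \<open>c0\<close> of \<open>H(x\<^sup>*)\<^sub>I\<^sub>I\<close> and a radius \<open>r\<close>
  on which the Hessian varies by less than \<open>\<epsilon>\<close>, small enough to keep half of \<open>c0\<close> and to make the
  linearization error absorbable in \<open>dist_to_central_point\<close>.\<close>
locale barrier_setting =
  fixes grad :: "real^'n \<Rightarrow> real^'n" and hess :: "real^'n \<Rightarrow> real^'n^'n"
    and xs ls :: "real^'n" and \<delta> M \<mu>hat C4 \<sigma> C1 c0 \<epsilon> r :: real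
    and xmu lmu :: "real \<Rightarrow> real^'n"
  assumes f_hess: "\<And>x. (grad has_derivative (\<lambda>h. hess x *v h)) (at x)"
    and xs_nn: "\<And>i. xs$i \<ge> 0" and compl: "\<And>i. xs$i * ls$i = 0" and strict: "\<And>i. xs$i + ls$i > 0"
    and Fp_nonsing: "\<And>x l. (x, l) \<in> ball (xs, ls) \<delta> \<Longrightarrow>
                        bij (Fprime (hess x) x l) \<and> onorm (inv (Fprime (hess x) x l)) \<le> M"
    and M: "1 \<le> M"
    and \<mu>hat_pos: "\<mu>hat > 0"
    and traj_ball: "\<And>\<mu>. \<mu> \<in> {0<..\<mu>hat} \<Longrightarrow> (xmu \<mu>, lmu \<mu>) \<in> ball (xs, ls) \<delta>"
    and traj_eq: "\<And>\<mu>. \<mu> \<in> {0<..\<mu>hat} \<Longrightarrow> Fmu grad \<mu> (xmu \<mu>) (lmu \<mu>) = 0"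
    and traj_dist: "\<And>\<mu>. \<mu> \<in> {0<..\<mu>hat} \<Longrightarrow> norm ((xmu \<mu>, lmu \<mu>) - (xs, ls)) \<le> C4 * \<mu>"
    and \<sigma>: "0 < \<sigma>" "\<sigma> < 1"
    and C1: "C1 > 0"
    and c0: "c0 > 0"
    and coercive: "\<And>v. \<forall>j\<in>{i. xs$i = 0}. v$j = 0 \<Longrightarrow>
                      c0 * (norm v)^2 \<le> quad_form_on {i. xs$i > 0} (hess xs) v"
    and \<epsilon>_coercive: "real CARD('n)^2 * \<epsilon> \<le> c0/2"
    and \<epsilon>_contraction: "M * (real CARD('n) * real CARD('n) * (2*\<epsilon>)) \<le> 1/4"
    and r: "r > 0" and hess_near: "\<And>u. norm (u - xs) < r \<Longrightarrow> norm (hess u - hess xs) < \<epsilon>"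
begin

definition "m0 = Min (range (\<lambda>i. xs$i + ls$i))"
definition "hess_bound = norm (hess xs) + \<epsilon>"
definition "lambda_bound = norm ls + m0"

lemma m0_pos: "0 < m0"
  unfolding m0_def using strict by simp

lemma m0_le: "m0 \<le> xs$i + ls$i"
  unfolding m0_def by (rule Min_le) auto

lemma \<epsilon>_pos: "0 < \<epsilon>"
  using hess_near[of xs] r by simp

lemma hess_bound_nonneg: "0 \<le> hess_bound"
  using \<epsilon>_pos by (simp add: hess_bound_def)

lemma C4_nonneg: "0 \<le> C4"
proof -
  have "norm ((xmu \<mu>hat, lmu \<mu>hat) - (xs, ls)) \<le> C4 * \<mu>hat"
    using traj_dist \<mu>hat_pos by simp
  then have "0 \<le> C4 * \<mu>hat" by (rule order_trans[OF norm_ge_zero])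
  then show ?thesis using \<mu>hat_pos by (simp add: zero_le_mult_iff)
qed

context
  fixes \<mu> :: real and x l :: "real^'n"
  assumes \<mu>: "\<mu> \<in> {0<..\<mu>hat}"
    and in_ball: "(x, l) \<in> ball (xs, ls) \<delta>"
    and x_pos: "\<And>i. x$i > 0" and l_pos: "\<And>i. l$i > 0"
    and residual: "norm (Fmu grad \<mu> x l) \<le> C1 * \<mu>"
begin

lemma dist_to_kkt:
  assumes near: "norm ((x, l) - (xmu \<mu>, lmu \<mu>)) < r/2"
    and near_scaled: "M * real CARD('n) * norm ((x, l) - (xmu \<mu>, lmu \<mu>)) \<le> 1/4"
    and \<mu>_small: "C4 * \<mu> < r/2"
  shows "norm ((x, l) - (xs, ls)) \<le> (2 * M * C1 + C4) * \<mu>"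
proof -
  define xm where "xm = xmu \<mu>"
  define lm where "lm = lmu \<mu>"
  have traj: "norm ((xm, lm) - (xs, ls)) \<le> C4 * \<mu>"
    unfolding xm_def lm_def by (rule traj_dist[OF \<mu>])
  have triangle: "norm ((x, l) - (xs, ls)) \<le> norm ((x, l) - (xm, lm)) + norm ((xm, lm) - (xs, ls))"
    using norm_triangle_ineq[of "(x, l) - (xm, lm)" "(xm, lm) - (xs, ls)"] by simp
  have "norm (xm - xs) < r"
    using norm_fst_le[of "xm - xs" "lm - ls"] traj \<mu>_small r by simp
  moreover have "norm (x - xs) < r"
    using norm_fst_le[of "x - xs" "l - ls"] triangle near traj \<mu>_small by (simp add: xm_def lm_def)
  ultimately have "norm ((x, l) - (xm, lm)) \<le> 2 * M * C1 * \<mu>"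
    using M traj_eq[OF \<mu>] Fp_nonsing[OF traj_ball[OF \<mu>]] residual \<epsilon>_contraction near_scaled
    by (intro dist_to_central_point[OF f_hess hess_near])
       (auto simp: xm_def lm_def intro: norm_le_onorm_inv_Fprime)
  then show ?thesis using triangle traj by (simp add: algebra_simps)
qed

lemma newton_direction:
  obtains p q where "Fprime (hess x) x l (p, q) = - Fmu grad (\<sigma> * \<mu>) x l"
    and "\<And>dN. Fprime (hess x) x l dN = - Fmu grad (\<sigma> * \<mu>) x l \<Longrightarrow> dN = (p, q)"
    and "norm (p, q) \<le> M * (C1 + real CARD('n)) * \<mu>"
proof -
  let ?T = "Fprime (hess x) x l" and ?b = "- Fmu grad (\<sigma> * \<mu>) x l"
  have bij: "bij ?T" using Fp_nonsing[OF in_ball] by simp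
  obtain p q where pq: "inv ?T ?b = (p, q)" by (meson surj_pair)
  have eq: "?T (p, q) = ?b" using bij pq[symmetric] by (simp add: bij_is_surj surj_f_inv_f)
  have "\<bar>\<mu> - \<sigma> * \<mu>\<bar> \<le> \<mu>" using \<sigma> \<mu> by (simp add: abs_le_iff)
  then have "norm (\<chi> i::'n. \<mu> - \<sigma> * \<mu>) \<le> real CARD('n) * \<mu>"
    using \<mu> by (intro norm_le_card_mult_cart) simp_all
  moreover have "Fmu grad (\<sigma> * \<mu>) x l = Fmu grad \<mu> x l + (0, \<chi> i. \<mu> - \<sigma> * \<mu>)"
    by (simp add: Fmu_def vec_eq_iff)
  then have "norm ?b \<le> norm (Fmu grad \<mu> x l) + norm (\<chi> i::'n. \<mu> - \<sigma> * \<mu>)"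
    using norm_triangle_ineq[of "Fmu grad \<mu> x l" "(0::real^'n, \<chi> i::'n. \<mu> - \<sigma> * \<mu>)"]
    by (simp only: norm_minus_cancel norm_Pair norm_zero) simp
  ultimately have rhs: "norm ?b \<le> (C1 + real CARD('n)) * \<mu>"
    using residual by (simp add: algebra_simps)
  have "norm (p, q) \<le> M * norm (?T (p, q))"
    using Fp_nonsing[OF in_ball] by (intro norm_le_onorm_inv_Fprime) auto
  also have "\<dots> \<le> M * ((C1 + real CARD('n)) * \<mu>)"
    unfolding eq using rhs M by (intro mult_left_mono) auto
  finally have "norm (p, q) \<le> M * (C1 + real CARD('n)) * \<mu>" by (simp only: mult.assoc)
  moreover have "dN = (p, q)" if "?T dN = ?b" for dN
    using that eq bij by (metis bij_is_inj injD)
  ultimately show ?thesis using that[OF eq] by blast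
qed

text \<open>Strict complementarity turns \<open>O(\<mu>)\<close>-closeness to \<open>(x\<^sup>*, \<lambda>\<^sup>*)\<close> into the scaling
  of \<open>newton_comparison\<close>, with \<open>\<lambda>\<^sub>A, x\<^sub>I \<ge> m0/2\<close>.\<close>
lemma newton_comparison_at:
  assumes newton: "Fprime (hess x) x l (p, q) = - Fmu grad (\<sigma> * \<mu>) x l"
    and pq: "norm (p, q) \<le> M * (C1 + real CARD('n)) * \<mu>"
    and dist: "norm ((x, l) - (xs, ls)) \<le> K * \<mu>" and K: "0 \<le> K"
    and small: "K * \<mu> \<le> m0/4" "K * \<mu> * hess_bound \<le> m0/4" and x_near: "K * \<mu> < r"
    and \<mu>1: "\<mu> \<le> 1"
  shows "newton_comparison (hess x) x l (grad x) p q {i. xs$i = 0} {i. xs$i > 0} (\<sigma> * \<mu>) \<mu>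
           (K + M * (C1 + real CARD('n))) hess_bound (m0/2) (c0/2) lambda_bound"
proof -
  define a where "a = K + M * (C1 + real CARD('n))"
  have a_pos: "0 \<le> a" "K * \<mu> \<le> a * \<mu>" using K M C1 \<mu> by (simp_all add: a_def)
  have dx: "\<bar>x$i - xs$i\<bar> \<le> K * \<mu>" and dl: "\<bar>l$i - ls$i\<bar> \<le> K * \<mu>" for i
    using component_le_norm_cart[of "x - xs" i] component_le_norm_cart[of "l - ls" i]
      norm_fst_le[of "x - xs" "l - ls"] norm_snd_le[of "l - ls" "x - xs"] dist by simp_all
  have K\<mu>: "0 \<le> K * \<mu>" using K \<mu> by simp
  have pq_comp: "\<bar>p$i\<bar> \<le> a * \<mu>" "\<bar>q$i\<bar> \<le> a * \<mu>" for i
    using component_le_norm_cart[of p i] component_le_norm_cart[of q i]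
      norm_fst_le[of p q] norm_snd_le[of q p] pq K\<mu> by (simp_all add: a_def algebra_simps)
  have "norm (x - xs) < r"
    using norm_fst_le[of "x - xs" "l - ls"] dist x_near by simp
  then have "norm (hess x - hess xs) < \<epsilon>" by (rule hess_near)
  then have hess_close: "\<bar>hess x$i$j - hess xs$i$j\<bar> \<le> \<epsilon>" for i j
    using matrix_entry_le_norm[of "hess x - hess xs" i j] by simp
  have hess_entry: "\<bar>hess x$i$j\<bar> \<le> hess_bound" for i j
    using hess_close[of i j] matrix_entry_le_norm[of "hess xs" i j] by (simp add: hess_bound_def)
  have active: "m0 \<le> ls$i" if "xs$i = 0" for i
    using m0_le[of i] that by simp
  have inactive: "m0 \<le> xs$i \<and> ls$i = 0" if "0 < xs$i" for i
    using m0_le[of i] compl[of i] that by simp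
  show ?thesis
  proof (unfold_locales, fold a_def)
    show "{i. xs$i = 0} \<inter> {i. xs$i > 0} = {}" "{i. xs$i = 0} \<union> {i. xs$i > 0} = UNIV"
      using xs_nn by (auto simp: less_eq_real_def)
    show "(hess x *v p)$i - q$i = l$i - grad x$i" "l$i * p$i + x$i * q$i = \<sigma> * \<mu> - l$i * x$i" for i
      using arg_cong[OF newton, of "\<lambda>z. fst z $ i"] arg_cong[OF newton, of "\<lambda>z. snd z $ i"]
      by (simp_all add: Fprime_def Fmu_def algebra_simps)
    show "x$i \<le> a * \<mu>" if "i \<in> {i. xs$i = 0}" for i
      using that dx[of i] a_pos by (simp add: abs_le_iff)
    show "m0/2 \<le> l$i" if "i \<in> {i. xs$i = 0}" for i
      using that active[of i] dl[of i] small(1) by (simp add: abs_le_iff)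
    show "m0/2 \<le> x$i" if "i \<in> {i. xs$i > 0}" for i
      using that inactive[of i] dx[of i] small(1) by (simp add: abs_le_iff)
    show "l$i \<le> a * \<mu>" if "i \<in> {i. xs$i > 0}" for i
      using that inactive[of i] dl[of i] a_pos by (simp add: abs_le_iff)
    show "l$i \<le> lambda_bound" for i
      using dl[of i] component_le_norm_cart[of ls i] small(1) m0_pos
      unfolding lambda_bound_def by linarith
    show "m0/2/2 \<le> x$i * hess x$i$i + l$i" if "i \<in> {i. xs$i = 0}" for i
    proof -
      have "x$i * \<bar>hess x$i$i\<bar> \<le> K * \<mu> * hess_bound"
        using that dx[of i] hess_entry[of i i] x_pos[of i] by (intro mult_mono) auto
      moreover have "- (x$i * \<bar>hess x$i$i\<bar>) \<le> x$i * hess x$i$i"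
        using abs_ge_minus_self[of "x$i * hess x$i$i"] x_pos[of i] by (simp add: abs_mult)
      ultimately show ?thesis using that active[of i] dl[of i] small by (simp add: abs_le_iff)
    qed
    show "c0/2 * (norm v)^2 \<le> quad_form_on {i. xs$i > 0} (hess x) v"
      if "\<forall>j\<in>{i. xs$i = 0}. v$j = 0" for v
      using quad_form_on_coercive_perturb[OF coercive[OF that] hess_close \<epsilon>_coercive] .
    show "0 < x$i" "0 < l$i" for i by (fact x_pos l_pos)+
    show "0 < \<mu>" using \<mu> by simp
    show "\<mu> \<le> 1" by (fact \<mu>1)
    show "0 < m0/2" using m0_pos by simp
    show "0 \<le> a" by (fact a_pos)
    show "\<bar>hess x$i$j\<bar> \<le> hess_bound" for i j by (fact hess_entry)
    show "\<bar>p$i\<bar> \<le> a * \<mu>" "\<bar>q$i\<bar> \<le> a * \<mu>" for i by (fact pq_comp)+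
    show "0 < c0/2" using c0 by simp
  qed
qed

end

lemma approx_newton_step:
  "\<exists>\<rho> > 0. \<exists>\<mu>bar. 0 < \<mu>bar \<and> \<mu>bar \<le> \<mu>hat \<and> (\<exists>C > 0.
     \<forall>\<mu> x l. 0 < \<mu> \<and> \<mu> \<le> \<mu>bar \<and> (x, l) \<in> ball (xs, ls) \<delta> \<and>
       (\<forall>i. x$i > 0) \<and> (\<forall>i. l$i > 0) \<and>
       norm ((x, l) - (xmu \<mu>, lmu \<mu>)) < \<rho> \<and> norm (Fmu grad \<mu> x l) \<le> C1 * \<mu> \<longrightarrow>
       (let A = {i. xs$i = 0}; I = {i. xs$i > 0}; H = hess x; gx = grad x; mup = \<sigma> * \<mu> in
        (\<forall>i\<in>A. x$i * H$i$i + l$i \<noteq> 0) \<and>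
        (\<forall>sS sL. let dxA = dxAct A sS gx H mup x l in
           (\<exists>!y. ls_system I A H gx mup x l dxA y) \<and>
           (\<forall>y. ls_system I A H gx mup x l dxA y \<longrightarrow>
              (let dx = dxA + y; dl = dlam I A sL H gx mup x l dx in
               \<forall>dN. Fprime H x l dN = - Fmu grad mup x l \<longrightarrow>
                    norm ((dx, dl) - dN) \<le> C * \<mu>^2)))))"
proof -
  define N where "N = real CARD('n)"
  define K where "K = 2 * M * C1 + C4"
  define a where "a = K + M * (C1 + N)"
  define \<rho> where "\<rho> = min (r/2) (1 / (4 * M * N))"
  define \<mu>bar where
    "\<mu>bar = min \<mu>hat (min 1 (min (r / (2 * (K + 1))) (m0 / (4 * (K + 1) * (hess_bound + 1)))))"
  define C where "C = max 1 (step_err CARD('n) a hess_bound (m0/2) (c0/2) lambda_bound)"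
  have N: "1 \<le> N" unfolding N_def by (simp add: Suc_le_eq)
  have K: "C4 \<le> K" "0 \<le> K" using M C1 C4_nonneg by (simp_all add: K_def)
  have "0 < \<rho>" "0 < \<mu>bar" "\<mu>bar \<le> \<mu>hat" "0 < C"
    using r M N \<mu>hat_pos K m0_pos hess_bound_nonneg by (simp_all add: \<rho>_def \<mu>bar_def C_def)
  moreover have "let A = {i. xs$i = 0}; I = {i. xs$i > 0}; H = hess x; gx = grad x; mup = \<sigma> * \<mu> in
      (\<forall>i\<in>A. x$i * H$i$i + l$i \<noteq> 0) \<and>
      (\<forall>sS sL. let dxA = dxAct A sS gx H mup x l in
         (\<exists>!y. ls_system I A H gx mup x l dxA y) \<and>
         (\<forall>y. ls_system I A H gx mup x l dxA y \<longrightarrow>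
            (let dx = dxA + y; dl = dlam I A sL H gx mup x l dx in
             \<forall>dN. Fprime H x l dN = - Fmu grad mup x l \<longrightarrow> norm ((dx, dl) - dN) \<le> C * \<mu>^2)))"
    if "0 < \<mu>" "\<mu> \<le> \<mu>bar" "(x, l) \<in> ball (xs, ls) \<delta>" "\<forall>i. x$i > 0" "\<forall>i. l$i > 0"
      "norm ((x, l) - (xmu \<mu>, lmu \<mu>)) < \<rho>" "norm (Fmu grad \<mu> x l) \<le> C1 * \<mu>" for \<mu> x l
  proof -
    have \<mu>: "\<mu> \<in> {0<..\<mu>hat}" "\<mu> \<le> 1" using that(1,2) by (simp_all add: \<mu>bar_def)
    note point = \<mu>(1) that(3) that(4,5)[rule_format] that(7)
    have "\<mu> * (2 * (K + 1)) \<le> r" and "\<mu> * (4 * (K + 1) * (hess_bound + 1)) \<le> m0"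
      using that(2) K hess_bound_nonneg by (simp_all add: \<mu>bar_def pos_le_divide_eq)
    moreover have "K * \<mu> \<le> (K + 1) * (hess_bound + 1) * \<mu>"
      and "K * hess_bound * \<mu> \<le> (K + 1) * (hess_bound + 1) * \<mu>"
      using that(1) K hess_bound_nonneg by (simp_all add: algebra_simps)
    ultimately have K\<mu>: "K * \<mu> < r/2" "K * \<mu> \<le> m0/4" "K * \<mu> * hess_bound \<le> m0/4"
      using that(1) by (simp_all add: algebra_simps)
    have "M * N * norm ((x, l) - (xmu \<mu>, lmu \<mu>)) \<le> M * N * (1 / (4 * M * N))"
      using that(6) M N by (intro mult_left_mono) (simp_all add: \<rho>_def)
    moreover have "C4 * \<mu> < r/2"
      using mult_right_mono[OF K(1) less_imp_le[OF that(1)]] K\<mu>(1) by linarith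
    ultimately have dist: "norm ((x, l) - (xs, ls)) \<le> K * \<mu>"
      using dist_to_kkt[OF point] that(6) M N by (simp add: K_def \<rho>_def N_def)
    obtain p q where newton: "Fprime (hess x) x l (p, q) = - Fmu grad (\<sigma> * \<mu>) x l"
      and unique: "\<And>dN. Fprime (hess x) x l dN = - Fmu grad (\<sigma> * \<mu>) x l \<Longrightarrow> dN = (p, q)"
      and pq: "norm (p, q) \<le> M * (C1 + real CARD('n)) * \<mu>"
      using newton_direction[OF point] by blast
    have "K * \<mu> < r" using K\<mu>(1) r by simp
    from newton_comparison_at[OF point newton pq dist K(2) K\<mu>(2,3) this \<mu>(2)]
    interpret newton_comparison "hess x" x l "grad x" p q "{i. xs$i = 0}" "{i. xs$i > 0}"
        "\<sigma> * \<mu>" \<mu> a hess_bound "m0/2" "c0/2" lambda_bound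
      by (simp only: a_def N_def)
    have err: "step_err CARD('n) a hess_bound (m0/2) (c0/2) lambda_bound * \<mu>^2 \<le> C * \<mu>^2"
      by (simp add: C_def mult_right_mono)
    show ?thesis
      unfolding Let_def
    proof (intro conjI allI ballI impI)
      show "x$i * hess x$i$i + l$i \<noteq> 0" if "i \<in> {i. xs$i = 0}" for i
        using diag_active_nonzero that .
      show "\<exists>!y. ls_system {i. xs$i > 0} {i. xs$i = 0} (hess x) (grad x) (\<sigma> * \<mu>) x l
              (dxAct {i. xs$i = 0} sS (grad x) (hess x) (\<sigma> * \<mu>) x l) y" for sS
        by (rule ls_system_unique)
    qed (use approx_step_error unique err in \<open>fastforce intro: order_trans\<close>)
  qed
  ultimately show ?thesis by blast
qed

end


theorem theorem1:
  fixes f :: "real^'n \<Rightarrow> real"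
    and grad :: "real^'n \<Rightarrow> real^'n"
    and hess :: "real^'n \<Rightarrow> real^'n^'n"
    and xs ls :: "real^'n"
    and \<delta> M \<mu>hat C4 \<sigma> C1 :: real
    and xmu lmu :: "real \<Rightarrow> real^'n"
  assumes f_grad: "\<And>x. (f has_derivative (\<lambda>h. grad x \<bullet> h)) (at x)"
    and f_hess: "\<And>x. (grad has_derivative (\<lambda>h. hess x *v h)) (at x)"
    and hess_cont: "continuous_on UNIV hess"
    and hess_loc_lip: "\<And>z. \<exists>r>0. \<exists>L. \<forall>u\<in>ball z r. \<forall>v\<in>ball z r.
                              norm (hess u - hess v) \<le> L * norm (u - v)"
    and kkt_grad: "grad xs = ls"
    and xs_nn: "\<And>i. xs$i \<ge> 0"
    and ls_nn: "\<And>i. ls$i \<ge> 0"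
    and compl: "\<And>i. xs$i * ls$i = 0"
    and strict: "\<And>i. xs$i + ls$i > 0"
    and posdef: "\<And>v. v \<noteq> 0 \<Longrightarrow> (\<forall>j. xs$j = 0 \<longrightarrow> v$j = 0) \<Longrightarrow>
                      (\<Sum>i\<in>{i. xs$i > 0}. \<Sum>j\<in>{j. xs$j > 0}. v$i * (hess xs)$i$j * v$j) > 0"
    and \<delta>_pos: "\<delta> > 0"
    and Fp_nonsing: "\<And>x l. (x, l) \<in> ball (xs, ls) \<delta> \<Longrightarrow>
                        bij (Fprime (hess x) x l) \<and> onorm (inv (Fprime (hess x) x l)) \<le> M"
    and \<mu>hat_pos: "\<mu>hat > 0"
    and traj_lip: "\<exists>L. L-lipschitz_on {0<..\<mu>hat} (\<lambda>\<mu>. (xmu \<mu>, lmu \<mu>))"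
    and traj_pos: "\<And>\<mu> i. \<mu> \<in> {0<..\<mu>hat} \<Longrightarrow> xmu \<mu> $ i > 0 \<and> lmu \<mu> $ i > 0"
    and traj_ball: "\<And>\<mu>. \<mu> \<in> {0<..\<mu>hat} \<Longrightarrow> (xmu \<mu>, lmu \<mu>) \<in> ball (xs, ls) \<delta>"
    and traj_eq: "\<And>\<mu>. \<mu> \<in> {0<..\<mu>hat} \<Longrightarrow> Fmu grad \<mu> (xmu \<mu>) (lmu \<mu>) = 0"
    and traj_dist: "\<And>\<mu>. \<mu> \<in> {0<..\<mu>hat} \<Longrightarrow> norm ((xmu \<mu>, lmu \<mu>) - (xs, ls)) \<le> C4 * \<mu>"
    and \<sigma>: "0 < \<sigma>" "\<sigma> < 1"
    and C1_pos: "C1 > 0"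
  shows "\<exists>\<rho> > 0. \<exists>\<mu>bar. 0 < \<mu>bar \<and> \<mu>bar \<le> \<mu>hat \<and> (\<exists>C > 0.
     \<forall>\<mu> x l. 0 < \<mu> \<and> \<mu> \<le> \<mu>bar \<and> (x, l) \<in> ball (xs, ls) \<delta> \<and>
       (\<forall>i. x$i > 0) \<and> (\<forall>i. l$i > 0) \<and>
       norm ((x, l) - (xmu \<mu>, lmu \<mu>)) < \<rho> \<and> norm (Fmu grad \<mu> x l) \<le> C1 * \<mu> \<longrightarrow>
       (let A = {i. xs$i = 0}; I = {i. xs$i > 0}; H = hess x; gx = grad x; mup = \<sigma> * \<mu> in
        (\<forall>i\<in>A. x$i * H$i$i + l$i \<noteq> 0) \<and>
        (\<forall>sS sL. let dxA = dxAct A sS gx H mup x l in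
           (\<exists>!y. ls_system I A H gx mup x l dxA y) \<and>
           (\<forall>y. ls_system I A H gx mup x l dxA y \<longrightarrow>
              (let dx = dxA + y; dl = dlam I A sL H gx mup x l dx in
               \<forall>dN. Fprime H x l dN = - Fmu grad mup x l \<longrightarrow>
                    norm ((dx, dl) - dN) \<le> C * \<mu>^2)))))"
proof -
  \<comment> \<open>Continuity of the Hessian suffices.\<close>
  define N where "N = real CARD('n)"
  have N: "1 \<le> N" unfolding N_def by (simp add: Suc_le_eq)
  obtain c0 where c0: "c0 > 0"
    and coercive: "\<And>v. \<forall>j\<in>{i. xs$i = 0}. v$j = 0 \<Longrightarrow>
                      c0 * (norm v)^2 \<le> quad_form_on {i. xs$i > 0} (hess xs) v"
    using quad_form_on_coercive[of "{i. xs$i = 0}" "{i. xs$i > 0}" "hess xs"] posdef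
    by (auto simp: quad_form_on_def)
  define M' where "M' = max M 1"
  define \<epsilon> where "\<epsilon> = min (c0 / (2 * N^2)) (1 / (8 * M' * N^2))"
  have M': "1 \<le> M'" by (simp add: M'_def)
  have Fp': "bij (Fprime (hess x) x l) \<and> onorm (inv (Fprime (hess x) x l)) \<le> M'"
    if "(x, l) \<in> ball (xs, ls) \<delta>" for x l
    using Fp_nonsing[OF that] by (auto simp: M'_def le_max_iff_disj)
  have \<epsilon>: "0 < \<epsilon>" "N^2 * \<epsilon> \<le> c0/2" "M' * (N * N * (2*\<epsilon>)) \<le> 1/4"
    using c0 N M' by (auto simp: \<epsilon>_def min_def field_simps power2_eq_square)
  obtain r where "r > 0" and "\<And>u. norm (u - xs) < r \<Longrightarrow> norm (hess u - hess xs) < \<epsilon>"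
    using hess_cont \<epsilon>(1) unfolding continuous_on_iff dist_norm by blast
  then interpret barrier_setting grad hess xs ls \<delta> M' \<mu>hat C4 \<sigma> C1 c0 \<epsilon> r xmu lmu
    using f_hess xs_nn compl strict Fp' \<mu>hat_pos traj_ball traj_eq traj_dist \<sigma> C1_pos
      c0 coercive \<epsilon> M'
    by unfold_locales (simp_all add: N_def)
  show ?thesis by (rule approx_newton_step)
qed

end
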